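(* Let $a,b,d\in\mathbb{C}$ with $a\neq b$. For every integer $n\ge 1$, $$\int_a^b S_n(u;a,b,d)\,du=2^n(b-a)^{n+1}B_n\!\left(\frac12+\frac{d}{b-a}\right),$$ where the integral is along any piecewise smooth path from $a$ to $b$ (the integrand being a polynomial) and $$S_n(u;a,b,d)=\sum_{k=0}^{n}\binom{n}{k}(2d)^k\,Q_{n-k}(u;a,b).$$ In particular (case $d=0$), $\int_a^b Q_n(u;a,b)\,du=2^nB_n(\tfrac12)(b-a)^{n+1}$.
   Context: The MacMahon numbers $M_{n,k}$ ($n\ge1$, $1\le k\le n$) are defined by $M_{n,1}=1$ for all $n\ge1$ and, for $n\ge 2$, $2\le k\le n$, $M_{n,k}=(2k-1)M_{n-1,k}+(2n-2k+1)M_{n-1,k-1}$, with the convention $M_{n-1,n}=0$. For $a,b\in\mathbb{C}$ the derivative polynomial is $Q_n(u;a,b)=\sum_{k=1}^{n+1}M_{n+1,k}(u-a)^{n+1-k}(u-b)^{k-1}$ ($n\ge 0$). The Bernoulli polynomials $B_n(w)$ are defined by $\sum_{n\ge0}B_n(w)\frac{t^n}{n!}=\frac{t e^{wt}}{e^t-1}$. *)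

theory Defs
  imports "HOL-Analysis.Analysis" "HOL-Computational_Algebra.Formal_Power_Series"
begin

text \<open>MacMahon numbers M(n,k) for n \<ge> 1, 1 \<le> k \<le> n; set to 0 outside that range
  (this realises the convention M(n-1,n) = 0).\<close>
fun macmahon :: "nat \<Rightarrow> nat \<Rightarrow> nat" where
  "macmahon 0 k = 0"
| "macmahon (Suc m) k =
     (if k = 1 then 1
      else if k < 1 \<or> k > Suc m then 0
      else (2*k - 1) * macmahon m k + (2 * Suc m - 2*k + 1) * macmahon m (k - 1))"

definition Qpoly :: "nat \<Rightarrow> complex \<Rightarrow> complex \<Rightarrow> complex \<Rightarrow> complex" where
  "Qpoly n u a b = (\<Sum>k=1..n+1. of_nat (macmahon (n+1) k) * (u - a) ^ (n + 1 - k) * (u - b) ^ (k - 1))"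

definition Spoly :: "nat \<Rightarrow> complex \<Rightarrow> complex \<Rightarrow> complex \<Rightarrow> complex \<Rightarrow> complex" where
  "Spoly n u a b d = (\<Sum>k=0..n. of_nat (n choose k) * (2*d) ^ k * Qpoly (n - k) u a b)"

definition bernpoly :: "nat \<Rightarrow> complex \<Rightarrow> complex" where
  "bernpoly n w = fact n * fps_nth (fps_X * fps_exp w / (fps_exp 1 - 1)) n"

definition has_contour_integral_path ::
  "(complex \<Rightarrow> complex) \<Rightarrow> complex \<Rightarrow> (real \<Rightarrow> complex) \<Rightarrow> bool" where
  "has_contour_integral_path f i g \<longleftrightarrow>
     ((\<lambda>x. f (g x) * vector_derivative g (at x within {0..1})) has_integral i) {0..1}"

end

theory Submission
  imports Defs "HOL-Complex_Analysis.Contour_Integration"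
begin

text \<open>
  Substituting \<open>u = a + (b - a) t\<close> turns \<open>Q_n(u; a, b)\<close> into \<open>(b - a)^n q_n(t)\<close> with
  \<open>q_n(t) = \<Sum>_j M(n+1, j+1) t^(n-j) (t - 1)^j\<close>, and the MacMahon recurrence says exactly
  \<open>q_(n+1) = (2t - 1) q_n + 2t(t - 1) q_n'\<close>. The polynomials \<open>\<Sum>_j A(n, j) (1 - t)^j\<close> with
  \<open>A(n, j) = \<Sum>_i (-1)^i (j choose i) (2i + 1)^n\<close> satisfy the same recurrence, so they equal
  \<open>q_n\<close>, and integrating termwise over \<open>[0, 1]\<close> gives \<open>\<Sum>_j A(n, j) / (j + 1) = 2^n B_n(1/2)\<close>
  by the formula \<open>B_n(w) = \<Sum>_j 1/(j + 1) \<Sum>_i (-1)^i (j choose i) (w + i)^n\<close>, which comes from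
  \<open>t / (e^t - 1) = -log(1 - z) / z\<close> with \<open>z = 1 - e^t\<close>. The integral of \<open>S_n\<close> then follows
  from the addition formula for Bernoulli polynomials. Since the integrands have polynomial
  primitives, the contour integrals do not depend on the path.
\<close>

text \<open>\<open>alt_binomial_sum j n w\<close> is \<open>(-1)^j\<close> times the \<open>j\<close>-th forward difference of \<open>x^n\<close> at
  \<open>w\<close>, and \<open>A(n, j) = 2^n * alt_binomial_sum j n (1/2)\<close>.\<close>

definition alt_binomial_sum :: "nat \<Rightarrow> nat \<Rightarrow> complex \<Rightarrow> complex" where
  "alt_binomial_sum j n w = (\<Sum>i\<le>j. of_nat (j choose i) * (-1) ^ i * (w + of_nat i) ^ n)"

lemma one_minus_fps_exp_power:
  "(1 - fps_exp (1::complex)) ^ j =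
     (\<Sum>i\<le>j. fps_const (of_nat (j choose i) * (-1) ^ i) * fps_exp (of_nat i))"
proof -
  have "(1 - fps_exp (1::complex)) ^ j = (\<Sum>i\<le>j. of_nat (j choose i) * (- fps_exp 1) ^ i)"
    using binomial_ring[of "- fps_exp (1::complex)" 1 j] by simp
  also have "\<dots> = (\<Sum>i\<le>j. fps_const (of_nat (j choose i) * (-1) ^ i) * fps_exp (of_nat i))"
  proof (rule sum.cong[OF refl])
    fix i
    have "(-1 :: complex fps) ^ i = fps_const ((-1) ^ i)"
      by (simp flip: fps_const_power fps_const_neg)
    then have "(- fps_exp (1::complex)) ^ i = fps_const ((-1) ^ i) * fps_exp (of_nat i)"
      by (simp only: power_minus[of "fps_exp 1"] fps_exp_power_mult mult_1_right)
    then show "of_nat (j choose i) * (- fps_exp (1::complex)) ^ i =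
        fps_const (of_nat (j choose i) * (-1) ^ i) * fps_exp (of_nat i)"
      by (simp only: fps_of_nat fps_const_mult[symmetric] mult.assoc)
  qed
  finally show ?thesis .
qed

lemma fps_nth_exp_times_one_minus_exp_power:
  "fps_nth (fps_exp w * (1 - fps_exp (1::complex)) ^ j) n = alt_binomial_sum j n w / fact n"
proof -
  have "fps_exp w * (1 - fps_exp (1::complex)) ^ j =
     (\<Sum>i\<le>j. fps_const (of_nat (j choose i) * (-1) ^ i) * fps_exp (w + of_nat i))"
    unfolding one_minus_fps_exp_power sum_distrib_left
    by (simp only: fps_exp_add_mult mult_ac)
  then show ?thesis
    by (simp add: alt_binomial_sum_def fps_sum_nth sum_divide_distrib)
qed

lemma alt_binomial_sum_eq_0:
  assumes "n < j"
  shows "alt_binomial_sum j n w = 0"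
proof -
  have "fps_nth ((1 - fps_exp (1::complex)) ^ j) k = 0" if "k \<le> n" for k
    using startsby_zero_power_prefix[of "1 - fps_exp (1::complex)" j] that assms by simp
  then have "fps_nth (fps_exp w * (1 - fps_exp (1::complex)) ^ j) n = 0"
    unfolding fps_mult_nth by (intro sum.neutral) simp
  then show ?thesis
    by (simp add: fps_nth_exp_times_one_minus_exp_power)
qed

lemma alt_binomial_sum_Suc:
  "alt_binomial_sum j (Suc n) w =
     (w + of_nat j) * alt_binomial_sum j n w - of_nat j * alt_binomial_sum (j - 1) n w"
proof -
  have "alt_binomial_sum j (Suc n) w = (w + of_nat j) * alt_binomial_sum j n w
      - (\<Sum>i\<le>j. of_nat ((j - i) * (j choose i)) * (-1) ^ i * (w + of_nat i) ^ n)"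
    unfolding alt_binomial_sum_def sum_distrib_left sum_subtractf[symmetric]
    by (rule sum.cong[OF refl]) (simp add: of_nat_diff algebra_simps)
  also have "(\<Sum>i\<le>j. of_nat ((j - i) * (j choose i)) * (-1) ^ i * (w + of_nat i) ^ n)
      = of_nat j * alt_binomial_sum (j - 1) n w"
  proof (cases j)
    case (Suc m)
    have "(\<Sum>i\<le>j. of_nat ((j - i) * (j choose i)) * (-1) ^ i * (w + of_nat i) ^ n)
        = (\<Sum>i\<le>Suc m. of_nat j * (of_nat (m choose i) * (-1) ^ i * (w + of_nat i) ^ n))"
      unfolding binomial_absorb_comp Suc by (rule sum.cong[OF refl]) (simp add: algebra_simps)
    then show ?thesis
      using Suc by (simp add: alt_binomial_sum_def sum_distrib_left)
  qed simp
  finally show ?thesis .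
qed

lemma alt_binomial_sum_add:
  "alt_binomial_sum j n (x + y) =
     (\<Sum>k\<le>n. of_nat (n choose k) * y ^ k * alt_binomial_sum j (n - k) x)"
proof -
  have "(x + y + of_nat i) ^ n = (\<Sum>k\<le>n. of_nat (n choose k) * y ^ k * (x + of_nat i) ^ (n - k))"
    for i
    using binomial_ring[of y "x + of_nat i" n] by (simp add: add_ac)
  then show ?thesis
    unfolding alt_binomial_sum_def sum_distrib_left
    by (subst sum.swap) (simp add: sum_distrib_left mult_ac)
qed

text \<open>The sum truncates \<open>-log(1 - z) / z\<close>, and \<open>-log(1 - z) = X\<close>; the truncation only
  affects coefficients beyond \<open>N + 1\<close>.\<close>

lemma fps_exp_minus_one_times_log_series_nth:
  fixes N :: nat
  defines "z \<equiv> 1 - fps_exp (1::complex)"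
  assumes "m \<le> Suc N"
  shows "fps_nth ((fps_exp 1 - 1) * (\<Sum>j\<le>N. fps_const (1 / of_nat (Suc j)) * z ^ j)) m
       = fps_nth fps_X m"
proof -
  define S where "S = (\<Sum>j\<le>N. fps_const (1 / of_nat (Suc j)) * z ^ Suc j)"
  have z0: "fps_nth z 0 = 0"
    unfolding z_def by simp
  have "fps_deriv S = (\<Sum>j\<le>N. (z - 1) * z ^ j)"
    unfolding S_def fps_deriv_sum
  proof (rule sum.cong[OF refl])
    fix j
    have "fps_const (1 / of_nat (Suc j)) * fps_const (of_nat (Suc j)) = (1 :: complex fps)"
      by (simp del: of_nat_Suc flip: fps_const_mult)
    moreover have "fps_deriv z = z - 1"
      unfolding z_def by simp
    ultimately show "fps_deriv (fps_const (1 / of_nat (Suc j)) * z ^ Suc j) = (z - 1) * z ^ j"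
      by (simp only: fps_deriv_mult_const_left fps_deriv_power diff_Suc_1 mult.assoc[symmetric]
          mult_1)
  qed
  also have "\<dots> = (z - 1) * (\<Sum>j<Suc N. z ^ j)"
    by (simp add: sum_distrib_left lessThan_Suc_atMost)
  also have "\<dots> = z ^ Suc N - 1"
    by (rule power_diff_1_eq[symmetric])
  finally have S_deriv: "fps_deriv S = z ^ Suc N - 1" .
  have "fps_nth S (Suc k) = (if k = 0 then -1 else 0)" if "k \<le> N" for k
  proof -
    have "fps_nth (z ^ Suc N) k = 0"
      using startsby_zero_power_prefix[OF z0, of "Suc N"] that by simp
    then have "of_nat (Suc k) * fps_nth S (Suc k) = (if k = 0 then -1 else 0)"
      using arg_cong[OF S_deriv, of "\<lambda>f. fps_nth f k"] by simp
    then show ?thesis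
      by (cases "k = 0") (simp, simp del: of_nat_Suc)
  qed
  moreover have "fps_nth S 0 = 0"
    unfolding S_def fps_sum_nth by (intro sum.neutral) (simp add: z0 startsby_zero_power)
  moreover have "(fps_exp 1 - 1) * (\<Sum>j\<le>N. fps_const (1 / of_nat (Suc j)) * z ^ j) = - S"
    unfolding S_def z_def sum_distrib_left
    by (simp add: sum_negf[symmetric] algebra_simps)
  ultimately show ?thesis
    using assms(2) by (cases m) auto
qed

lemma fps_X_times_exp_divide_times:
  "fps_X * fps_exp w / (fps_exp 1 - 1) * (fps_exp 1 - 1) = fps_X * fps_exp (w::complex)"
proof (rule fps_times_divide_eq)
  have "fps_nth (fps_exp 1 - (1::complex fps)) 1 \<noteq> 0"
    by simp
  then show "fps_exp 1 - (1::complex fps) \<noteq> 0"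
    by auto
  show "subdegree (fps_exp 1 - (1::complex fps)) \<le> subdegree (fps_X * fps_exp w)"
  proof -
    have "subdegree (fps_exp 1 - (1::complex fps)) \<le> 1"
      by (rule subdegree_leI) simp
    moreover have "fps_nth (fps_X * fps_exp w) 1 \<noteq> (0::complex)"
      by simp
    then have "fps_X * fps_exp w \<noteq> (0::complex fps)"
      by auto
    then have "1 \<le> subdegree (fps_X * fps_exp w)"
      by (intro subdegree_geI) auto
    ultimately show ?thesis by simp
  qed
qed

lemma bernpoly_eq_alt_binomial_sum:
  assumes "n \<le> N"
  shows "bernpoly n w = (\<Sum>j\<le>N. alt_binomial_sum j n w / of_nat (Suc j))"
proof -
  define z where "z = 1 - fps_exp (1::complex)"
  define L where "L = (\<Sum>j\<le>N. fps_const (1 / of_nat (Suc j)) * z ^ j)"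
  define B where "B = fps_X * fps_exp w / (fps_exp 1 - (1::complex fps))"
  have "fps_nth B n = fps_nth (B * fps_X) (Suc n)"
    by simp
  also have "\<dots> = fps_nth (B * ((fps_exp 1 - 1) * L)) (Suc n)"
    unfolding fps_mult_nth[of B]
  proof (rule sum.cong[OF refl])
    fix i assume "i \<in> {0..Suc n}"
    with assms have "Suc n - i \<le> Suc N" by auto
    then have "fps_nth ((fps_exp 1 - 1) * L) (Suc n - i) = fps_nth fps_X (Suc n - i)"
      unfolding L_def z_def by (rule fps_exp_minus_one_times_log_series_nth)
    then show "fps_nth B i * fps_nth fps_X (Suc n - i) =
        fps_nth B i * fps_nth ((fps_exp 1 - 1) * L) (Suc n - i)"
      by simp
  qed
  also have "B * ((fps_exp 1 - 1) * L) = fps_X * (fps_exp w * L)"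
    using fps_X_times_exp_divide_times[of w] unfolding B_def by (metis mult.assoc)
  also have "fps_nth (fps_X * (fps_exp w * L)) (Suc n) =
      (\<Sum>j\<le>N. fps_nth (fps_exp w * z ^ j) n / of_nat (Suc j))"
    unfolding fps_X_mult_nth L_def sum_distrib_left fps_sum_nth
    by (simp add: mult.left_commute[of "fps_exp w"])
  finally show ?thesis
    unfolding bernpoly_def B_def z_def
    by (simp add: fps_nth_exp_times_one_minus_exp_power sum_distrib_left)
qed

lemma bernpoly_add:
  "bernpoly n (x + y) = (\<Sum>k\<le>n. of_nat (n choose k) * y ^ k * bernpoly (n - k) x)"
  unfolding bernpoly_eq_alt_binomial_sum[OF order_refl, of n] alt_binomial_sum_add
    bernpoly_eq_alt_binomial_sum[OF diff_le_self, of n]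
  unfolding sum_divide_distrib sum_distrib_left
  by (rule trans[OF sum.swap]) (simp add: mult_ac)

lemma has_contour_integral_path_primitive:
  assumes "\<And>u. (F has_field_derivative f u) (at u)" and "valid_path g"
  shows "has_contour_integral_path f (F (pathfinish g) - F (pathstart g)) g"
  using contour_integral_primitive[of UNIV F f g] assms
  unfolding has_contour_integral_path_def has_contour_integral_def by simp

declare macmahon.simps [simp del]

lemma macmahon_eq_0: "m < k \<Longrightarrow> macmahon m k = 0"
  by (cases m) (auto simp: macmahon.simps)

lemma macmahon_Suc_Suc:
  assumes "j \<le> Suc n"
  shows "(of_nat (macmahon (Suc (Suc n)) (Suc j)) :: complex) =
     (2 * of_nat j + 1) * of_nat (macmahon (Suc n) (Suc j))
     + (2 * of_nat n + 3 - 2 * of_nat j) * of_nat (macmahon (Suc n) j)"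
proof -
  have "macmahon (Suc (Suc n)) (Suc j) =
      (2 * j + 1) * macmahon (Suc n) (Suc j) + (2 * n + 3 - 2 * j) * macmahon (Suc n) j"
  proof (cases j)
    case 0
    then show ?thesis by (simp add: macmahon.simps(2))
  next
    case (Suc i)
    with assms show ?thesis by (subst macmahon.simps(2)) (simp add: Suc_diff_le)
  qed
  then have "(of_nat (macmahon (Suc (Suc n)) (Suc j)) :: complex) =
      of_nat (2 * j + 1) * of_nat (macmahon (Suc n) (Suc j))
      + of_nat (2 * n + 3 - 2 * j) * of_nat (macmahon (Suc n) j)"
    by (simp only: of_nat_add[symmetric] of_nat_mult[symmetric])
  with assms show ?thesis
    by (simp add: of_nat_diff)
qed

definition macmahon_poly :: "nat \<Rightarrow> complex \<Rightarrow> complex" where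
  "macmahon_poly n t = (\<Sum>j\<le>n. of_nat (macmahon (Suc n) (Suc j)) * t ^ (n - j) * (t - 1) ^ j)"

lemma Qpoly_eq_macmahon_poly:
  assumes "a \<noteq> b"
  shows "Qpoly n u a b = (b - a) ^ n * macmahon_poly n ((u - a) / (b - a))"
proof -
  define t where "t = (u - a) / (b - a)"
  have ua: "u - a = (b - a) * t" and ub: "u - b = (b - a) * (t - 1)"
    unfolding t_def using assms by (simp_all add: field_simps)
  have "Qpoly n u a b = (\<Sum>j\<le>n. of_nat (macmahon (Suc n) (Suc j)) * (u - a) ^ (n - j) * (u - b) ^ j)"
    unfolding Qpoly_def
    by (simp only: Suc_eq_plus1[symmetric] One_nat_def add_Suc_right add_0_right
        sum.shift_bounds_cl_Suc_ivl atMost_atLeast0 diff_Suc_Suc diff_Suc_1 diff_zero)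
  also have "\<dots> = (b - a) ^ n * macmahon_poly n t"
    unfolding macmahon_poly_def sum_distrib_left ua ub power_mult_distrib
    by (rule sum.cong[OF refl]) (simp add: mult_ac power_add[symmetric])
  finally show ?thesis
    unfolding t_def .
qed

definition macmahon_step :: "(complex \<Rightarrow> complex) \<Rightarrow> complex \<Rightarrow> complex" where
  "macmahon_step p t = (2 * t - 1) * p t + 2 * t * (t - 1) * deriv p t"

lemma macmahon_step_sum:
  assumes "\<And>j. j \<le> n \<Longrightarrow> (f j has_field_derivative f' j) (at t)"
  shows "macmahon_step (\<lambda>t. \<Sum>j\<le>n. f j t) t
       = (\<Sum>j\<le>n. (2 * t - 1) * f j t + 2 * t * (t - 1) * f' j)"
proof -
  have "((\<lambda>t. \<Sum>j\<le>n. f j t) has_field_derivative (\<Sum>j\<le>n. f' j)) (at t)"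
    using assms by (intro DERIV_sum) auto
  then show ?thesis
    unfolding macmahon_step_def by (simp add: DERIV_imp_deriv sum_distrib_left sum.distrib)
qed

lemma mult_of_nat_times_power_pred: "(x::complex) * (of_nat p * x ^ (p - 1)) = of_nat p * x ^ p"
  by (cases p) simp_all

lemma macmahon_poly_Suc_expand:
  "macmahon_poly (Suc n) t = (\<Sum>j\<le>n. of_nat (macmahon (Suc n) (Suc j)) * t ^ (n - j) * (t - 1) ^ j *
      ((2 * of_nat j + 1) * t + (2 * of_nat (n - j) + 1) * (t - 1)))"
proof -
  let ?M = "\<lambda>j. (of_nat (macmahon (Suc n) j) :: complex)"
  have "macmahon_poly (Suc n) t = (\<Sum>j\<le>Suc n. (2 * of_nat j + 1) * ?M (Suc j) * t ^ (Suc n - j) * (t - 1) ^ j)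
      + (\<Sum>j\<le>Suc n. (2 * of_nat n + 3 - 2 * of_nat j) * ?M j * t ^ (Suc n - j) * (t - 1) ^ j)"
    unfolding macmahon_poly_def sum.distrib[symmetric]
    by (rule sum.cong[OF refl]) (simp add: macmahon_Suc_Suc distrib_right)
  also have "(\<Sum>j\<le>Suc n. (2 * of_nat j + 1) * ?M (Suc j) * t ^ (Suc n - j) * (t - 1) ^ j)
      = (\<Sum>j\<le>n. (2 * of_nat j + 1) * ?M (Suc j) * t ^ (n - j) * (t - 1) ^ j * t)"
    by (simp add: macmahon_eq_0 Suc_diff_le mult_ac)
  also have "(\<Sum>j\<le>Suc n. (2 * of_nat n + 3 - 2 * of_nat j) * ?M j * t ^ (Suc n - j) * (t - 1) ^ j)
      = (\<Sum>j\<le>n. (2 * of_nat (n - j) + 1) * ?M (Suc j) * t ^ (n - j) * (t - 1) ^ j * (t - 1))"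
    unfolding sum.atMost_Suc_shift
    by (simp add: macmahon.simps, rule sum.cong[OF refl], simp add: of_nat_diff algebra_simps)
  finally show ?thesis
    unfolding sum.distrib[symmetric] by (simp add: algebra_simps)
qed

lemma macmahon_poly_Suc: "macmahon_poly (Suc n) t = macmahon_step (macmahon_poly n) t"
proof -
  let ?c = "\<lambda>j. (of_nat (macmahon (Suc n) (Suc j)) :: complex)"
  have "((\<lambda>t. ?c j * t ^ (n - j) * (t - 1) ^ j) has_field_derivative
      ?c j * (of_nat (n - j) * t ^ (n - j - 1) * (t - 1) ^ j + of_nat j * t ^ (n - j) * (t - 1) ^ (j - 1))) (at t)" for j
    by (auto intro!: derivative_eq_intros simp: algebra_simps)
  then have "macmahon_step (macmahon_poly n) t = (\<Sum>j\<le>n. (2 * t - 1) * (?c j * t ^ (n - j) * (t - 1) ^ j)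
      + 2 * t * (t - 1) * (?c j * (of_nat (n - j) * t ^ (n - j - 1) * (t - 1) ^ j
        + of_nat j * t ^ (n - j) * (t - 1) ^ (j - 1))))"
    unfolding macmahon_poly_def[abs_def] by (rule macmahon_step_sum)
  also have "\<dots> = macmahon_poly (Suc n) t"
    unfolding macmahon_poly_Suc_expand
  proof (rule sum.cong[OF refl])
    fix j
    have "2 * t * (t - 1) * (of_nat (n - j) * t ^ (n - j - 1) * (t - 1) ^ j + of_nat j * t ^ (n - j) * (t - 1) ^ (j - 1))
        = 2 * (t - 1) * (t * (of_nat (n - j) * t ^ (n - j - 1))) * (t - 1) ^ j
          + 2 * t * t ^ (n - j) * ((t - 1) * (of_nat j * (t - 1) ^ (j - 1)))"
      by (simp add: algebra_simps)
    then show "(2 * t - 1) * (?c j * t ^ (n - j) * (t - 1) ^ j)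
      + 2 * t * (t - 1) * (?c j * (of_nat (n - j) * t ^ (n - j - 1) * (t - 1) ^ j
        + of_nat j * t ^ (n - j) * (t - 1) ^ (j - 1)))
      = ?c j * t ^ (n - j) * (t - 1) ^ j * ((2 * of_nat j + 1) * t + (2 * of_nat (n - j) + 1) * (t - 1))"
      unfolding distrib_left[of "?c j", symmetric] mult.left_commute[of _ "?c j"]
      by (simp only: mult_of_nat_times_power_pred) (simp add: algebra_simps)
  qed
  finally show ?thesis ..
qed

definition alt_binomial_poly :: "nat \<Rightarrow> complex \<Rightarrow> complex" where
  "alt_binomial_poly n t = (\<Sum>j\<le>n. 2 ^ n * alt_binomial_sum j n (1/2) * (1 - t) ^ j)"

lemma alt_binomial_poly_Suc: "alt_binomial_poly (Suc n) t = macmahon_step (alt_binomial_poly n) t"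
proof -
  let ?c = "\<lambda>j. 2 ^ n * alt_binomial_sum j n (1/2)"
  have "((\<lambda>t. ?c j * (1 - t) ^ j) has_field_derivative - (?c j * (of_nat j * (1 - t) ^ (j - 1)))) (at t)" for j
    by (auto intro!: derivative_eq_intros)
  then have "macmahon_step (alt_binomial_poly n) t = (\<Sum>j\<le>n. (2 * t - 1) * (?c j * (1 - t) ^ j)
      + 2 * t * (t - 1) * - (?c j * (of_nat j * (1 - t) ^ (j - 1))))"
    unfolding alt_binomial_poly_def[abs_def] by (rule macmahon_step_sum)
  also have "\<dots> = (\<Sum>j\<le>n. ?c j * (1 - t) ^ j * ((2 * of_nat j + 1) - 2 * of_nat (Suc j) * (1 - t)))"
  proof (rule sum.cong[OF refl])
    fix j
    have "2 * t * (t - 1) * - (?c j * (of_nat j * (1 - t) ^ (j - 1)))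
        = 2 * t * ?c j * ((1 - t) * (of_nat j * (1 - t) ^ (j - 1)))"
      by (simp add: algebra_simps)
    then show "(2 * t - 1) * (?c j * (1 - t) ^ j) + 2 * t * (t - 1) * - (?c j * (of_nat j * (1 - t) ^ (j - 1)))
        = ?c j * (1 - t) ^ j * ((2 * of_nat j + 1) - 2 * of_nat (Suc j) * (1 - t))"
      by (simp only: mult_of_nat_times_power_pred) (simp add: algebra_simps)
  qed
  also have "\<dots> = (\<Sum>j\<le>Suc n. 2 ^ Suc n * (1/2 + of_nat j) * alt_binomial_sum j n (1/2) * (1 - t) ^ j)
      - (\<Sum>j\<le>Suc n. 2 ^ Suc n * of_nat j * alt_binomial_sum (j - 1) n (1/2) * (1 - t) ^ j)"
    unfolding sum.atMost_Suc_shift[of "\<lambda>j. 2 ^ Suc n * of_nat j * _ j * _ j"]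
    by (simp add: alt_binomial_sum_eq_0 sum_subtractf[symmetric] algebra_simps)
  also have "\<dots> = alt_binomial_poly (Suc n) t"
    unfolding alt_binomial_poly_def alt_binomial_sum_Suc sum_subtractf[symmetric]
    by (rule sum.cong[OF refl]) (simp add: algebra_simps)
  finally show ?thesis ..
qed

lemma macmahon_poly_eq_alt_binomial_poly: "macmahon_poly n = alt_binomial_poly n"
proof (induction n)
  case 0
  show ?case
    by (simp add: fun_eq_iff macmahon_poly_def alt_binomial_poly_def alt_binomial_sum_def
        macmahon.simps)
next
  case (Suc n)
  show ?case
    by (rule ext) (simp add: macmahon_poly_Suc alt_binomial_poly_Suc Suc.IH)
qed

definition Qpoly_primitive :: "nat \<Rightarrow> complex \<Rightarrow> complex \<Rightarrow> complex \<Rightarrow> complex" where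
  "Qpoly_primitive n a b u = - ((b - a) ^ Suc n *
     (\<Sum>j\<le>n. 2 ^ n * alt_binomial_sum j n (1/2) / of_nat (Suc j) * ((b - u) / (b - a)) ^ Suc j))"

lemma Qpoly_primitive_deriv:
  assumes "a \<noteq> b"
  shows "(Qpoly_primitive n a b has_field_derivative Qpoly n u a b) (at u)"
proof -
  let ?c = "\<lambda>j. 2 ^ n * alt_binomial_sum j n (1/2)"
  let ?x = "\<lambda>u. (b - u) / (b - a)"
  have dx: "(?x has_field_derivative - 1 / (b - a)) (at u)"
    using DERIV_cdivide[OF DERIV_diff[OF DERIV_const[of b] DERIV_ident], of "b - a"] by simp
  have "((\<lambda>u. ?c j / of_nat (Suc j) * ?x u ^ Suc j) has_field_derivative
      ?c j * ?x u ^ j * (- 1 / (b - a))) (at u)" for j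
    using DERIV_cmult[OF DERIV_power[OF dx, of "Suc j"], of "?c j / of_nat (Suc j)"]
    by (simp del: of_nat_Suc add: mult_ac)
  then have "(Qpoly_primitive n a b has_field_derivative
      - ((b - a) ^ Suc n * (\<Sum>j\<le>n. ?c j * ?x u ^ j * (- 1 / (b - a))))) (at u)"
    unfolding Qpoly_primitive_def[abs_def] by (intro DERIV_minus DERIV_cmult DERIV_sum)
  moreover have "- ((b - a) ^ Suc n * (\<Sum>j\<le>n. ?c j * ?x u ^ j * (- 1 / (b - a))))
      = (b - a) ^ n * alt_binomial_poly n ((u - a) / (b - a))"
  proof -
    have "1 - (u - a) / (b - a) = ?x u"
      using assms by (simp add: field_simps)
    then show ?thesis
      unfolding alt_binomial_poly_def sum_distrib_left sum_negf[symmetric]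
      using assms by (intro sum.cong) (simp_all add: field_simps)
  qed
  ultimately show ?thesis
    using assms by (simp add: Qpoly_eq_macmahon_poly macmahon_poly_eq_alt_binomial_poly)
qed

lemma Qpoly_primitive_diff:
  assumes "a \<noteq> b"
  shows "Qpoly_primitive n a b b - Qpoly_primitive n a b a = 2 ^ n * bernpoly n (1/2) * (b - a) ^ (n + 1)"
  unfolding Qpoly_primitive_def bernpoly_eq_alt_binomial_sum[OF order_refl]
  using assms by (simp add: sum_distrib_left mult_ac)

definition Spoly_primitive :: "nat \<Rightarrow> complex \<Rightarrow> complex \<Rightarrow> complex \<Rightarrow> complex \<Rightarrow> complex" where
  "Spoly_primitive n a b d u = (\<Sum>k=0..n. of_nat (n choose k) * (2 * d) ^ k * Qpoly_primitive (n - k) a b u)"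

lemma Spoly_primitive_deriv:
  assumes "a \<noteq> b"
  shows "(Spoly_primitive n a b d has_field_derivative Spoly n u a b d) (at u)"
  unfolding Spoly_primitive_def[abs_def] Spoly_def
  by (intro DERIV_sum DERIV_cmult Qpoly_primitive_deriv assms)

lemma Spoly_primitive_diff:
  assumes "a \<noteq> b"
  shows "Spoly_primitive n a b d b - Spoly_primitive n a b d a
       = 2 ^ n * (b - a) ^ (n + 1) * bernpoly n (1/2 + d / (b - a))"
proof -
  have "Spoly_primitive n a b d b - Spoly_primitive n a b d a
      = (\<Sum>k\<le>n. of_nat (n choose k) * (2 * d) ^ k * (2 ^ (n - k) * bernpoly (n - k) (1/2) * (b - a) ^ (n - k + 1)))"
    unfolding Spoly_primitive_def atMost_atLeast0 sum_subtractf[symmetric]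
      right_diff_distrib[symmetric] Qpoly_primitive_diff[OF assms] Suc_eq_plus1 ..
  also have "\<dots> = (\<Sum>k\<le>n. 2 ^ n * (b - a) ^ (n + 1) * (of_nat (n choose k) * (d / (b - a)) ^ k * bernpoly (n - k) (1/2)))"
  proof (rule sum.cong[OF refl])
    fix k assume "k \<in> {..n}"
    then have pow2: "(2::complex) ^ n = 2 ^ k * 2 ^ (n - k)"
      and pow_ba: "(b - a) ^ (n + 1) = (b - a) ^ k * (b - a) ^ (n - k + 1)"
      by (simp_all flip: power_add)
    have "(d / (b - a)) ^ k * (b - a) ^ k = d ^ k"
      using assms by (simp add: power_divide)
    then show "of_nat (n choose k) * (2 * d) ^ k * (2 ^ (n - k) * bernpoly (n - k) (1/2) * (b - a) ^ (n - k + 1))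
      = 2 ^ n * (b - a) ^ (n + 1) * (of_nat (n choose k) * (d / (b - a)) ^ k * bernpoly (n - k) (1/2))"
      unfolding pow2 pow_ba power_mult_distrib by (simp add: mult_ac flip: \<open>_ = d ^ k\<close>)
  qed
  also have "\<dots> = 2 ^ n * (b - a) ^ (n + 1) * bernpoly n (1/2 + d / (b - a))"
    unfolding bernpoly_add sum_distrib_left by (simp add: mult_ac)
  finally show ?thesis .
qed

theorem theorem5:
  fixes a b d :: complex and n :: nat and \<gamma> :: "real \<Rightarrow> complex"
  assumes "a \<noteq> b" and "n \<ge> 1"
    and "valid_path \<gamma>" and "pathstart \<gamma> = a" and "pathfinish \<gamma> = b"
  shows "has_contour_integral_path (\<lambda>u. Spoly n u a b d)
           (2 ^ n * (b - a) ^ (n + 1) * bernpoly n (1/2 + d / (b - a))) \<gamma>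
       \<and> has_contour_integral_path (\<lambda>u. Qpoly n u a b)
           (2 ^ n * bernpoly n (1/2) * (b - a) ^ (n + 1)) \<gamma>"
  using has_contour_integral_path_primitive[OF Spoly_primitive_deriv[OF assms(1)] assms(3)]
    has_contour_integral_path_primitive[OF Qpoly_primitive_deriv[OF assms(1)] assms(3)]
    Spoly_primitive_diff[OF assms(1)] Qpoly_primitive_diff[OF assms(1)] assms(4,5)
  by simp

end
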